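(* Consider $K$ tiers of satellites, tier $k$ consisting of $N_k$ satellites placed independently and uniformly on the sphere of radius $R_k$, with tier $m$ legitimate and tiers $k\ne m$ eavesdropping. For the $j$-th satellite of tier $k\ne m$ with central angle $\theta_{kj}$ to the typical device at $(0,0,R_\oplus)$ and distance $d_{kj,0}=\sqrt{R_\oplus^2+R_k^2-2R_\oplus R_k\cos\theta_{kj}}$, define (when $\theta_{kj}<\theta_{k,\max}$) $$\mathrm{SINR}_{kj}=\frac{\gamma P_{\rm rec}(d_{kj,0})}{(1-\gamma)P_{\rm rec}(d_{kj,0})+\mathcal{I}_{kj}+\sigma_S^2},\qquad P_{\rm rec}(d)=P_t\left(\frac{c}{4\pi f d}\right)^2G|h_{kj,0}|^2,$$ and set $\mathrm{SINR}_{kj}=0$ when $\theta_{kj}\ge\theta_{k,\max}$ (not visible). Assume: $m_1$ is a positive integer; $0<\beta_{\rm ES}<\gamma/(1-\gamma)$ (any $\beta_{\rm ES}>0$ if $\gamma=1$); the events $\{\mathrm{SINR}_{kj}<\beta_{\rm ES}\}$ are mutually independent over all $k\ne m$ and $j$; $|h_{kj,0}|^2$ is independent of $(\theta_{kj},\mathcal{I}_{kj})$ with CDF $F(x)=\left[1-\exp\!\left(-\frac{(m_1!)^{-1/m_1}}{m_2}x\right)\right]^{m_1}$; and conditionally on $\theta_{kj}$, $\mathcal{I}_{kj}$ has Laplace transform $$\mathcal{L}_{\mathcal{I}_{kj}}(s)=\exp\!\left(-\lambda_u\int_0^{2\pi}\!\!\int_0^{\theta_{k,\max}}\left[1-\left(1+m_2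 s P_t G\left(\frac{c}{4\pi f d_k(\vartheta)}\right)^2\right)^{-m_1}\right]R_\oplus^2\sin\vartheta\,d\vartheta\,d\varphi\right),$$ $d_k(\vartheta)=\sqrt{R_\oplus^2+R_k^2-2R_\oplus R_k\cos\vartheta}$. Then $$\mathcal{P}_{\rm out}=\mathbb{P}\left[\max_{k\ne m}\max_{j}\mathrm{SINR}_{kj}<\beta_{\rm ES}\right]=\prod_{k=1,k\ne m}^{K}\left[\sum_{q=0}^{m_1}\binom{m_1}{q}(-1)^q\int_0^{\theta_{k,\max}}\exp\!\left(-q s_{\rm ES}\sigma_S^2\right)\mathcal{L}_{\mathcal{I}_{kj}}(q s_{\rm ES})\frac{\sin\theta}{2}\,d\theta+\frac{1+\cos\theta_{k,\max}}{2}\right]^{N_k},$$ where $s_{\rm ES}=s_{\rm ES}(\theta)=\frac{(m_1!)^{-1/m_1}}{m_2}\frac{\beta_{\rm ES}}{[\gamma-\beta_{\rm ES}(1-\gamma)]P_tG}\left(\frac{4\pi f d_k(\theta)}{c}\right)^2$.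
   Context: $R_\oplus$ is the Earth radius and $R_k=R_\oplus+a_k>R_\oplus$ with $a_k$ the altitude of tier $k$; $\gamma\in(0,1]$ is the fraction of transmit power $P_t>0$ carrying information, the remaining $(1-\gamma)P_t$ being artificial noise which eavesdroppers cannot remove; $G>0$ antenna gain; $c$ speed of light; $f>0$ carrier frequency; $\sigma_S^2>0$ noise power; $\lambda_u$ density of the Poisson point process of interfering devices on the Earth sphere; $m_1,m_2>0$ fading parameters. Given a half beamwidth angle $\theta_{\rm beam}\in(0,\pi/2)$, $$\theta_{k,\max}=\begin{cases}\sin^{-1}\!\left(\frac{R_k}{R_\oplus}\sin\theta_{\rm beam}\right)-\theta_{\rm beam}, & \theta_{\rm beam}<\sin^{-1}\!\left(\frac{R_\oplus}{R_k}\right),\\[2pt] \cos^{-1}\!\left(\frac{R_\oplus}{R_k}\right), & \theta_{\rm beam}\ge \sin^{-1}\!\left(\frac{R_\oplus}{R_k}\right).\end{cases}$$ The central angle of a single uniformly placed satellite to the typical device has density $\frac{\sin\theta}{2}$ on $[0,\pi]$. *)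

theory Defs
  imports "HOL-Probability.Probability"
begin

text \<open>Tier radius R_k = R_earth + a_k, with a_k the altitude of tier k.\<close>
definition tier_radius :: "real \<Rightarrow> (nat \<Rightarrow> real) \<Rightarrow> nat \<Rightarrow> real" where
  "tier_radius Rearth a k = Rearth + a k"

definition theta_max :: "real \<Rightarrow> (nat \<Rightarrow> real) \<Rightarrow> real \<Rightarrow> nat \<Rightarrow> real" where
  "theta_max Rearth a thb k =
     (let Rk = tier_radius Rearth a k in
      if thb < arcsin (Rearth / Rk) then arcsin (Rk / Rearth * sin thb) - thb
      else arccos (Rearth / Rk))"

definition dist_k :: "real \<Rightarrow> (nat \<Rightarrow> real) \<Rightarrow> nat \<Rightarrow> real \<Rightarrow> real" where
  "dist_k Rearth a k th =
     (let Rk = tier_radius Rearth a k in sqrt (Rearth\<^sup>2 + Rk\<^sup>2 - 2 * Rearth * Rk * cos th))"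

definition P_rec :: "real \<Rightarrow> real \<Rightarrow> real \<Rightarrow> real \<Rightarrow> real \<Rightarrow> real \<Rightarrow> real" where
  "P_rec Pt G c f d hsq = Pt * (c / (4 * pi * f * d))\<^sup>2 * G * hsq"

definition SINR_sat ::
  "real \<Rightarrow> (nat \<Rightarrow> real) \<Rightarrow> real \<Rightarrow> real \<Rightarrow> real \<Rightarrow> real \<Rightarrow> real \<Rightarrow> real \<Rightarrow> real \<Rightarrow>
   nat \<Rightarrow> real \<Rightarrow> real \<Rightarrow> real \<Rightarrow> real" where
  "SINR_sat Rearth a thb gam Pt G c f sig2 k th hsq Iv =
     (if th < theta_max Rearth a thb k then
        (let Pr = P_rec Pt G c f (dist_k Rearth a k th) hsq in
         gam * Pr / ((1 - gam) * Pr + Iv + sig2))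
      else 0)"

definition fading_cdf :: "nat \<Rightarrow> real \<Rightarrow> real \<Rightarrow> real" where
  "fading_cdf m1 m2 x =
     (if x < 0 then 0
      else (1 - exp (- ((fact m1) powr (- 1 / real m1) / m2) * x)) ^ m1)"

definition laplace_I ::
  "real \<Rightarrow> (nat \<Rightarrow> real) \<Rightarrow> real \<Rightarrow> real \<Rightarrow> real \<Rightarrow> real \<Rightarrow> real \<Rightarrow> real \<Rightarrow> nat \<Rightarrow> real \<Rightarrow>
   nat \<Rightarrow> real \<Rightarrow> real" where
  "laplace_I Rearth a thb lam Pt G c f m1 m2 k s =
     exp (- lam * (LBINT phi=0..(2*pi). (LBINT v=0..(theta_max Rearth a thb k).
        (1 - (1 + m2 * s * Pt * G * (c / (4 * pi * f * dist_k Rearth a k v))\<^sup>2) powr (- real m1))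
        * Rearth\<^sup>2 * sin v)))"

definition s_ES ::
  "real \<Rightarrow> (nat \<Rightarrow> real) \<Rightarrow> real \<Rightarrow> real \<Rightarrow> real \<Rightarrow> real \<Rightarrow> real \<Rightarrow> real \<Rightarrow> nat \<Rightarrow> real \<Rightarrow>
   nat \<Rightarrow> real \<Rightarrow> real" where
  "s_ES Rearth a gam bet Pt G c f m1 m2 k th =
     (fact m1) powr (- 1 / real m1) / m2 * bet / ((gam - bet * (1 - gam)) * Pt * G)
     * (4 * pi * f * dist_k Rearth a k th / c)\<^sup>2"

end

theory Submission
  imports Defs
begin

text \<open>A tier-k satellite fails to eavesdrop iff it is not visible, which has probability
  (1 + cos theta_max)/2 under the angle density sin/2, or it is visible at angle theta and its fading
  power stays below s_ES(theta) (I + sigma^2) / rate, where F(x) = (1 - exp (- rate x))^m1 is the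
  fading CDF. As the fading is independent of (theta, I), the latter event has probability
  E[F(threshold)], and expanding F binomially leaves the terms E[exp (- q s_ES(theta) (I + sigma^2))],
  which the conditional Laplace transform of I evaluates. Independence over all satellites gives
  the product.\<close>

lemma tier_radius_gt:
  fixes Rearth :: real and a :: "nat \<Rightarrow> real" and k :: nat
  assumes "0 < a k"
  shows "Rearth < tier_radius Rearth a k"
  using assms by (simp add: tier_radius_def)

lemma dist_k_pos:
  fixes Rearth :: real and a :: "nat \<Rightarrow> real" and k :: nat and th :: real
  assumes "0 < Rearth" "0 < a k"
  shows "0 < dist_k Rearth a k th"
proof -
  define R where "R = tier_radius Rearth a k"
  have "Rearth < R" using tier_radius_gt[of a k Rearth, OF assms(2)] by (simp add: R_def)
  have "Rearth * R * cos th \<le> Rearth * R"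
    using \<open>Rearth < R\<close> assms(1) by (intro mult_left_le) auto
  then have "(R - Rearth)\<^sup>2 \<le> Rearth\<^sup>2 + R\<^sup>2 - 2 * Rearth * R * cos th"
    by (simp add: power2_diff algebra_simps)
  moreover have "0 < (R - Rearth)\<^sup>2" using \<open>Rearth < R\<close> by simp
  ultimately have "0 < Rearth\<^sup>2 + R\<^sup>2 - 2 * Rearth * R * cos th" by linarith
  then show ?thesis by (simp add: dist_k_def R_def[symmetric])
qed

lemma continuous_on_dist_k: "continuous_on UNIV (dist_k Rearth a k)"
  unfolding dist_k_def Let_def by (intro continuous_intros)

lemma theta_max_bounds:
  assumes "0 < Rearth" "0 < a k" "0 < thb" "thb < pi / 2"
  shows "theta_max Rearth a thb k \<in> {0..pi}"
proof -
  define R where "R = tier_radius Rearth a k"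
  have "Rearth < R" using tier_radius_gt[of a k Rearth, OF assms(2)] by (simp add: R_def)
  then have ratio: "0 < Rearth / R" "Rearth / R < 1" using assms(1) by auto
  show ?thesis
  proof (cases "thb < arcsin (Rearth / R)")
    case True
    have "sin thb < sin (arcsin (Rearth / R))"
      using True assms(3,4) arcsin_le_mono[of "Rearth / R" 1] ratio
      by (intro sin_monotone_2pi) auto
    then have "R / Rearth * sin thb < 1"
      using ratio assms(1) \<open>Rearth < R\<close> by (simp add: field_simps)
    moreover have "sin thb \<le> R / Rearth * sin thb"
      using sin_gt_zero[of thb] assms \<open>Rearth < R\<close> by (intro mult_le_cancel_right1[THEN iffD2]) auto
    moreover have "0 < sin thb" using assms(3,4) by (intro sin_gt_zero) auto
    ultimately have "thb \<le> arcsin (R / Rearth * sin thb)" "arcsin (R / Rearth * sin thb) \<le> pi / 2"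
      using arcsin_le_arcsin[of "sin thb" "R / Rearth * sin thb"]
        arcsin_ubound[of "R / Rearth * sin thb"] assms(3,4)
      by (auto simp: arcsin_sin)
    then show ?thesis using True assms(3)
      unfolding theta_max_def R_def[symmetric] Let_def by auto
  next
    case False
    then show ?thesis using ratio arccos_lbound[of "Rearth / R"] arccos_ubound[of "Rearth / R"]
      unfolding theta_max_def R_def[symmetric] Let_def by auto
  qed
qed

definition fading_rate :: "nat \<Rightarrow> real \<Rightarrow> real" where
  "fading_rate m1 m2 = fact m1 powr (- 1 / real m1) / m2"

lemma fading_rate_pos: "0 < m2 \<Longrightarrow> 0 < fading_rate m1 m2"
  by (simp add: fading_rate_def)

lemma fading_cdf_eq:
  "1 \<le> m1 \<Longrightarrow> fading_cdf m1 m2 x = (1 - exp (- fading_rate m1 m2 * max 0 x)) ^ m1"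
  by (simp add: fading_cdf_def fading_rate_def max_def)

lemma isCont_fading_cdf: "1 \<le> m1 \<Longrightarrow> isCont (fading_cdf m1 m2) x"
proof -
  assume "1 \<le> m1"
  then have "fading_cdf m1 m2 = (\<lambda>x. (1 - exp (- fading_rate m1 m2 * max 0 x)) ^ m1)"
    by (simp add: fading_cdf_eq fun_eq_iff)
  moreover have "continuous_on UNIV (\<lambda>x. (1 - exp (- fading_rate m1 m2 * max 0 x)) ^ m1)"
    by (intro continuous_intros)
  ultimately show ?thesis
    by (simp add: continuous_on_eq_continuous_at)
qed

lemma fading_cdf_nonpos: "1 \<le> m1 \<Longrightarrow> x \<le> 0 \<Longrightarrow> fading_cdf m1 m2 x = 0"
  by (simp add: fading_cdf_eq)

lemma borel_measurable_fading_cdf[measurable]: "fading_cdf m1 m2 \<in> borel_measurable borel"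
  unfolding fading_cdf_def by measurable

lemma fading_cdf_binomial:
  assumes "1 \<le> m1" "0 \<le> x"
  shows "fading_cdf m1 m2 x =
    (\<Sum>q = 0..m1. real (m1 choose q) * (-1) ^ q * exp (- real q * (fading_rate m1 m2 * x)))"
proof -
  have "fading_cdf m1 m2 x = (- exp (- fading_rate m1 m2 * x) + 1) ^ m1"
    using assms by (simp add: fading_cdf_eq)
  also have "\<dots> = (\<Sum>q\<le>m1. real (m1 choose q) * (- exp (- fading_rate m1 m2 * x)) ^ q)"
    using binomial_ring[of "- exp (- fading_rate m1 m2 * x)" 1 m1] by simp
  also have "\<dots> = (\<Sum>q = 0..m1. real (m1 choose q) * (-1) ^ q * exp (- real q * (fading_rate m1 m2 * x)))"
    by (intro sum.cong) (auto simp: power_minus' exp_of_nat_mult[symmetric] mult.assoc)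
  finally show ?thesis .
qed

lemma SINR_sat_less_iff:
  assumes "0 < Rearth" "0 < a k"
    and "0 < Pt" "0 < G" "0 < c" "0 < f" "0 < sig2" "0 < m2"
    and "gam \<le> 1" "bet * (1 - gam) < gam" "0 < bet"
    and visible: "th < theta_max Rearth a thb k" and "0 \<le> h" "0 \<le> i"
  shows "SINR_sat Rearth a thb gam Pt G c f sig2 k th h i < bet \<longleftrightarrow>
     fading_rate m1 m2 * h < s_ES Rearth a gam bet Pt G c f m1 m2 k th * (i + sig2)"
proof -
  define u where "u = (c / (4 * pi * f * dist_k Rearth a k th))\<^sup>2"
  have "0 < u" using dist_k_pos[of Rearth a k th, OF assms(1,2)] assms(3-6) by (simp add: u_def)
  define Pr where "Pr = Pt * u * G * h"
  have "0 \<le> Pr" using \<open>0 < u\<close> assms by (simp add: Pr_def)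
  then have "0 \<le> (1 - gam) * Pr" using assms by simp
  then have denom: "0 < (1 - gam) * Pr + i + sig2" using assms by linarith
  define D where "D = (gam - bet * (1 - gam)) * Pt * G * u"
  have "0 < D" using \<open>0 < u\<close> assms by (simp add: D_def)
  have threshold: "s_ES Rearth a gam bet Pt G c f m1 m2 k th * (i + sig2)
      = fading_rate m1 m2 * (bet * (i + sig2) / D)"
    unfolding s_ES_def fading_rate_def u_def D_def
    using dist_k_pos[of Rearth a k th, OF assms(1,2)] assms(3-6) by (simp add: field_simps)
  have "SINR_sat Rearth a thb gam Pt G c f sig2 k th h i < bet \<longleftrightarrow>
        gam * Pr < bet * ((1 - gam) * Pr + i + sig2)"
    using visible denom by (simp add: SINR_sat_def P_rec_def Pr_def u_def Let_def divide_less_eq)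
  also have "\<dots> \<longleftrightarrow> h * D < bet * (i + sig2)"
    by (simp add: Pr_def D_def algebra_simps)
  also have "\<dots> \<longleftrightarrow> h < bet * (i + sig2) / D"
    using \<open>0 < D\<close> by (simp add: less_divide_eq)
  also have "\<dots> \<longleftrightarrow> fading_rate m1 m2 * h < s_ES Rearth a gam bet Pt G c f m1 m2 k th * (i + sig2)"
    unfolding threshold using fading_rate_pos[OF assms(8), of m1] by (simp only: mult_less_cancel_left_pos)
  finally show ?thesis .
qed

lemma secrecy_margin_pos:
  fixes gam bet :: real
  assumes "gam \<le> 1" "gam < 1 \<Longrightarrow> bet < gam / (1 - gam)"
  shows "bet * (1 - gam) < gam"
proof (cases "gam < 1")
  case True
  then show ?thesis using assms(2) by (simp add: pos_less_divide_eq)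
qed (use assms in auto)

lemma s_ES_nonneg:
  assumes "0 < Pt" "0 < G" "0 < m2" "0 < bet" "bet * (1 - gam) < gam"
  shows "0 \<le> s_ES Rearth a gam bet Pt G c f m1 m2 k th"
  using assms unfolding s_ES_def by (intro mult_nonneg_nonneg zero_le_power2) simp_all

lemma continuous_on_s_ES: "c \<noteq> 0 \<Longrightarrow> continuous_on UNIV (s_ES Rearth a gam bet Pt G c f m1 m2 k)"
  unfolding s_ES_def by (intro continuous_intros continuous_on_dist_k) auto

lemma (in prob_space) prob_less_eq_continuous_cdf:
  fixes X :: "'a \<Rightarrow> real"
  assumes [measurable]: "X \<in> borel_measurable M"
    and cdf: "\<And>x. prob {w \<in> space M. X w \<le> x} = F x" and cont: "isCont F y"
  shows "prob {w \<in> space M. X w < y} = F y"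
proof -
  interpret D: real_distribution "distr M borel X" by simp
  have "cdf (distr M borel X) = F"
    by (simp add: fun_eq_iff cdf_def measure_distr vimage_def Int_def conj_commute cdf[symmetric])
  then have "(F \<longlongrightarrow> measure (distr M borel X) {..<y}) (at_left y)"
    using D.cdf_at_left by simp
  moreover have "(F \<longlongrightarrow> F y) (at_left y)"
    using cont by (simp add: isCont_def filterlim_at_split)
  ultimately have "measure (distr M borel X) {..<y} = F y"
    by (rule tendsto_unique[rotated]) simp
  then show ?thesis by (simp add: measure_distr vimage_def Int_def conj_commute)
qed

lemma (in prob_space) prob_eq_expectation_indicator:
  "prob {w \<in> space M. X w \<in> A} = expectation (\<lambda>w. indicator A (X w) :: real)"
  by (simp add: indicator_vimage[symmetric] vimage_def Int_def conj_commute)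

lemma (in prob_space) distr_pair_eq_pair_measure:
  fixes H :: "'a \<Rightarrow> real"
  assumes [measurable]: "Z \<in> measurable M N" "H \<in> borel_measurable M"
    and indep: "\<And>B C. B \<in> sets borel \<Longrightarrow> C \<in> sets N \<Longrightarrow>
      prob {w \<in> space M. H w \<in> B \<and> Z w \<in> C} = prob {w \<in> space M. H w \<in> B} * prob {w \<in> space M. Z w \<in> C}"
  shows "distr M N Z \<Otimes>\<^sub>M distr M borel H = distr M (N \<Otimes>\<^sub>M borel) (\<lambda>w. (Z w, H w))"
proof (rule pair_measure_eqI)
  fix C B assume "C \<in> sets (distr M N Z)" "B \<in> sets (distr M borel H)"
  then have [measurable]: "C \<in> sets N" "B \<in> sets borel" by auto
  have "emeasure (distr M (N \<Otimes>\<^sub>M borel) (\<lambda>w. (Z w, H w))) (C \<times> B)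
      = prob {w \<in> space M. H w \<in> B \<and> Z w \<in> C}"
    by (simp add: emeasure_distr emeasure_eq_measure vimage_def Int_def conj_commute)
  also have "\<dots> = emeasure (distr M N Z) C * emeasure (distr M borel H) B"
    using indep[of B C]
    by (simp add: emeasure_distr emeasure_eq_measure ennreal_mult[symmetric] vimage_def Int_def
        conj_commute mult.commute)
  finally show "emeasure (distr M N Z) C * emeasure (distr M borel H) B
      = emeasure (distr M (N \<Otimes>\<^sub>M borel) (\<lambda>w. (Z w, H w))) (C \<times> B)" ..
qed (auto intro!: prob_space_imp_sigma_finite prob_space_distr)

lemma (in prob_space) prob_less_independent:
  fixes H :: "'a \<Rightarrow> real"
  assumes [measurable]: "Z \<in> measurable M N" "H \<in> borel_measurable M"
    "Y \<in> borel_measurable N" "S \<in> sets N" "F \<in> borel_measurable borel"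
    and indep: "\<And>B C. B \<in> sets borel \<Longrightarrow> C \<in> sets N \<Longrightarrow>
      prob {w \<in> space M. H w \<in> B \<and> Z w \<in> C} = prob {w \<in> space M. H w \<in> B} * prob {w \<in> space M. Z w \<in> C}"
    and F: "\<And>y. prob {w \<in> space M. H w < y} = F y"
  shows "prob {w \<in> space M. Z w \<in> S \<and> H w < Y (Z w)} = expectation (\<lambda>w. indicator S (Z w) * F (Y (Z w)))"
proof -
  define PZ where "PZ = distr M N Z"
  define PH where "PH = distr M borel H"
  interpret PH: prob_space PH unfolding PH_def by (rule prob_space_distr) simp
  define D where "D = {p \<in> space (N \<Otimes>\<^sub>M borel). fst p \<in> S \<and> snd p < Y (fst p)}"
  have D_sets[measurable]: "D \<in> sets (N \<Otimes>\<^sub>M borel)"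
    unfolding D_def by measurable
  then have [measurable]: "D \<in> sets (PZ \<Otimes>\<^sub>M PH)"
    unfolding PZ_def PH_def by (simp cong: sets_pair_measure_cong)
  have F_bounds: "0 \<le> F y \<and> F y \<le> 1" for y
    by (metis F measure_nonneg prob_le_1)
  have "PZ \<Otimes>\<^sub>M PH = distr M (N \<Otimes>\<^sub>M borel) (\<lambda>w. (Z w, H w))"
    unfolding PZ_def PH_def by (rule distr_pair_eq_pair_measure[OF assms(1,2) indep])
  then have "emeasure (PZ \<Otimes>\<^sub>M PH) D = emeasure M ((\<lambda>w. (Z w, H w)) -` D \<inter> space M)"
    by (simp add: emeasure_distr D_sets)
  also have "(\<lambda>w. (Z w, H w)) -` D \<inter> space M = {w \<in> space M. Z w \<in> S \<and> H w < Y (Z w)}"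
    using measurable_space[OF assms(1)] by (auto simp: D_def space_pair_measure)
  finally have "emeasure M {w \<in> space M. Z w \<in> S \<and> H w < Y (Z w)} = emeasure (PZ \<Otimes>\<^sub>M PH) D" ..
  also have "\<dots> = (\<integral>\<^sup>+ z. emeasure PH (Pair z -` D) \<partial>PZ)"
    by (rule PH.emeasure_pair_measure_alt) simp
  also have "\<dots> = (\<integral>\<^sup>+ z. ennreal (indicator S z * F (Y z)) \<partial>PZ)"
  proof (rule nn_integral_cong)
    fix z assume "z \<in> space PZ"
    then have "z \<in> space N" by (simp add: PZ_def)
    show "emeasure PH (Pair z -` D) = ennreal (indicator S z * F (Y z))"
    proof (cases "z \<in> S")
      case True
      then have "emeasure PH (Pair z -` D) = emeasure M {w \<in> space M. H w < Y z}"
        unfolding PH_def D_def using \<open>z \<in> space N\<close>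
        by (subst emeasure_distr) (auto intro!: arg_cong2[where f=emeasure] simp: space_pair_measure)
      then show ?thesis using True by (simp add: emeasure_eq_measure F)
    qed (simp add: D_def)
  qed
  also have "\<dots> = (\<integral>\<^sup>+ w. ennreal (indicator S (Z w) * F (Y (Z w))) \<partial>M)"
    unfolding PZ_def by (subst nn_integral_distr) auto
  also have "\<dots> = ennreal (expectation (\<lambda>w. indicator S (Z w) * F (Y (Z w))))"
    using F_bounds
    by (intro nn_integral_eq_integral integrable_const_bound[where B=1]) (auto simp: indicator_def)
  finally show ?thesis
    using F_bounds by (simp add: emeasure_eq_measure integral_nonneg_AE indicator_def)
qed

lemma (in prob_space) prob_all_indep_events:
  assumes "indep_events E J" "finite J"
  shows "prob {w \<in> space M. \<forall>j \<in> J. w \<in> E j} = (\<Prod>j\<in>J. prob (E j))"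
proof (cases "J = {}")
  case False
  have "E j \<subseteq> space M" if "j \<in> J" for j
    using assms(1) that sets.sets_into_space by (auto simp: indep_events_def)
  then have "{w \<in> space M. \<forall>j \<in> J. w \<in> E j} = (\<Inter>j\<in>J. E j)"
    using False by auto
  then show ?thesis using assms False by (simp add: indep_events_def)
qed (simp add: prob_space)

lemma floor_grid_tendsto: "(\<lambda>n. of_int \<lfloor>real (Suc n) * x\<rfloor> / real (Suc n)) \<longlonglongrightarrow> x"
proof (rule tendsto_sandwich[where f="\<lambda>n. x - inverse (real (Suc n))" and h="\<lambda>n. x"])
  have "x - inverse (real (Suc n)) \<le> of_int \<lfloor>real (Suc n) * x\<rfloor> / real (Suc n)"
    "of_int \<lfloor>real (Suc n) * x\<rfloor> / real (Suc n) \<le> x" for n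
  proof -
    define r where "r = real (Suc n)"
    have "0 < r" by (simp add: r_def)
    have "x - inverse r = (r * x - 1) / r" using \<open>0 < r\<close> by (simp add: field_simps)
    also have "\<dots> \<le> of_int \<lfloor>r * x\<rfloor> / r" using \<open>0 < r\<close> by (intro divide_right_mono) linarith+
    finally show "x - inverse r \<le> of_int \<lfloor>r * x\<rfloor> / r" .
    show "of_int \<lfloor>r * x\<rfloor> / r \<le> x" using \<open>0 < r\<close> by (simp add: divide_le_eq mult.commute)
  qed
  then show "\<forall>\<^sub>F n in sequentially. x - inverse (real (Suc n)) \<le> of_int \<lfloor>real (Suc n) * x\<rfloor> / real (Suc n)"
    "\<forall>\<^sub>F n in sequentially. of_int \<lfloor>real (Suc n) * x\<rfloor> / real (Suc n) \<le> x"
    by simp_all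
  show "(\<lambda>n. x - inverse (real (Suc n))) \<longlonglongrightarrow> x"
    using tendsto_diff[OF tendsto_const LIMSEQ_inverse_real_of_nat, of x] by simp
qed simp

lemma indicator_floor_partition:
  fixes g :: "int \<Rightarrow> real"
  assumes "0 < r" "S \<subseteq> {lo..hi}"
  shows "indicator S x * g \<lfloor>r * x\<rfloor>
    = (\<Sum>z\<in>{\<lfloor>r * lo\<rfloor>..\<lfloor>r * hi\<rfloor>}. indicator (S \<inter> {x. \<lfloor>r * x\<rfloor> = z}) x * g z)"
proof (cases "x \<in> S")
  case True
  then have "\<lfloor>r * x\<rfloor> \<in> {\<lfloor>r * lo\<rfloor>..\<lfloor>r * hi\<rfloor>}"
    using assms by (auto intro!: floor_mono)
  then show ?thesis using True
    by (simp add: indicator_def if_distrib[of "\<lambda>b. b * _"] cong: if_cong)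
qed simp

lemma measurable_at_random_parameter:
  fixes c :: "'b \<Rightarrow> 'a \<Rightarrow> real"
  assumes "case_prod c \<in> borel_measurable (N \<Otimes>\<^sub>M M)" "p \<in> measurable M N"
  shows "(\<lambda>w. c (p w) w) \<in> borel_measurable M"
  using measurable_compose[of "\<lambda>w. (p w, w)" M "N \<Otimes>\<^sub>M M" "case_prod c"] assms by simp

lemma (in prob_space) integral_grid_eq_sum:
  fixes X :: "'a \<Rightarrow> real" and c :: "real \<Rightarrow> 'a \<Rightarrow> real"
  assumes [measurable]: "X \<in> borel_measurable M" "case_prod c \<in> borel_measurable (borel \<Otimes>\<^sub>M M)"
    and bounded: "\<And>t w. w \<in> space M \<Longrightarrow> \<bar>c t w\<bar> \<le> B"
    and "0 < r" and [measurable]: "S \<in> sets borel" and S_bounded: "S \<subseteq> {lo..hi}"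
  shows "expectation (\<lambda>w. indicator S (X w) * c (of_int \<lfloor>r * X w\<rfloor> / r) w)
    = (\<Sum>z\<in>{\<lfloor>r * lo\<rfloor>..\<lfloor>r * hi\<rfloor>}.
        expectation (\<lambda>w. indicator (S \<inter> {x. \<lfloor>r * x\<rfloor> = z}) (X w) * c (of_int z / r) w))"
proof -
  have "integrable M (\<lambda>w. indicator A (X w) * c t w)" if [measurable]: "A \<in> sets borel" for A t
    using measurable_at_random_parameter[OF assms(2), of "\<lambda>_. t"] bounded
    by (intro integrable_const_bound[where B=B] AE_I2)
      (auto simp: indicator_def abs_mult intro: order_trans[OF abs_ge_zero])
  then show ?thesis
    using indicator_floor_partition[OF \<open>0 < r\<close> S_bounded]
    by (subst Bochner_Integration.integral_sum[symmetric]) (auto intro!: Bochner_Integration.integral_cong)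
qed

lemma (in prob_space) integral_grid_tendsto:
  fixes X :: "'a \<Rightarrow> real" and c :: "real \<Rightarrow> 'a \<Rightarrow> real"
  assumes [measurable]: "X \<in> borel_measurable M" "case_prod c \<in> borel_measurable (borel \<Otimes>\<^sub>M M)"
    and bounded: "\<And>t w. w \<in> space M \<Longrightarrow> \<bar>c t w\<bar> \<le> B"
    and cont: "\<And>w. w \<in> space M \<Longrightarrow> continuous_on UNIV (\<lambda>t. c t w)"
    and [measurable]: "S \<in> sets borel"
  shows "(\<lambda>n. expectation (\<lambda>w. indicator S (X w) * c (of_int \<lfloor>real (Suc n) * X w\<rfloor> / real (Suc n)) w))
    \<longlonglongrightarrow> expectation (\<lambda>w. indicator S (X w) * c (X w) w)"
proof (rule integral_dominated_convergence[where w="\<lambda>_. B"])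
  show "AE w in M. (\<lambda>n. indicator S (X w) * c (of_int \<lfloor>real (Suc n) * X w\<rfloor> / real (Suc n)) w)
      \<longlonglongrightarrow> indicator S (X w) * c (X w) w"
    using cont
    by (intro AE_I2 tendsto_mult_left impI continuous_on_tendsto_compose[OF _ floor_grid_tendsto]) auto
  show "\<And>n. AE w in M. norm (indicator S (X w) * c (of_int \<lfloor>real (Suc n) * X w\<rfloor> / real (Suc n)) w) \<le> B"
    using bounded by (intro AE_I2) (auto simp: indicator_def abs_mult intro: order_trans[OF abs_ge_zero])
qed (auto intro: measurable_at_random_parameter[OF assms(2)])

text \<open>Freezing the parameter on the grid of mesh 1/n, the hypothesis applies cell by cell; the
  grid approximation then converges by dominated convergence.\<close>

lemma (in prob_space) integral_eq_at_random_parameter: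
  fixes X :: "'a \<Rightarrow> real" and f g :: "real \<Rightarrow> 'a \<Rightarrow> real"
  assumes [measurable]: "X \<in> borel_measurable M"
    "case_prod f \<in> borel_measurable (borel \<Otimes>\<^sub>M M)" "case_prod g \<in> borel_measurable (borel \<Otimes>\<^sub>M M)"
    and bounded: "\<And>t w. w \<in> space M \<Longrightarrow> \<bar>f t w\<bar> \<le> B" "\<And>t w. w \<in> space M \<Longrightarrow> \<bar>g t w\<bar> \<le> B"
    and cont: "\<And>w. w \<in> space M \<Longrightarrow> continuous_on UNIV (\<lambda>t. f t w)"
      "\<And>w. w \<in> space M \<Longrightarrow> continuous_on UNIV (\<lambda>t. g t w)"
    and eq: "\<And>t A. A \<in> sets borel \<Longrightarrow>
      expectation (\<lambda>w. indicator A (X w) * f t w) = expectation (\<lambda>w. indicator A (X w) * g t w)"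
    and S[measurable]: "S \<in> sets borel" and S_bounded: "S \<subseteq> {lo..hi}"
  shows "expectation (\<lambda>w. indicator S (X w) * f (X w) w) = expectation (\<lambda>w. indicator S (X w) * g (X w) w)"
proof -
  have "expectation (\<lambda>w. indicator S (X w) * f (of_int \<lfloor>real (Suc n) * X w\<rfloor> / real (Suc n)) w)
      = expectation (\<lambda>w. indicator S (X w) * g (of_int \<lfloor>real (Suc n) * X w\<rfloor> / real (Suc n)) w)" for n
  proof -
    have r: "0 < real (Suc n)" by simp
    show ?thesis
      using integral_grid_eq_sum[where c=f, OF assms(1,2) bounded(1) r S S_bounded]
        integral_grid_eq_sum[where c=g, OF assms(1,3) bounded(2) r S S_bounded]
      by (simp only:) (intro sum.cong refl eq, measurable)
  qed
  moreover have "(\<lambda>n. expectation (\<lambda>w. indicator S (X w) * f (of_int \<lfloor>real (Suc n) * X w\<rfloor> / real (Suc n)) w))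
      \<longlonglongrightarrow> expectation (\<lambda>w. indicator S (X w) * f (X w) w)"
    using assms(1,2) bounded(1) cont(1) S by (rule integral_grid_tendsto)
  moreover have "(\<lambda>n. expectation (\<lambda>w. indicator S (X w) * g (of_int \<lfloor>real (Suc n) * X w\<rfloor> / real (Suc n)) w))
      \<longlonglongrightarrow> expectation (\<lambda>w. indicator S (X w) * g (X w) w)"
    using assms(1,3) bounded(2) cont(2) S by (rule integral_grid_tendsto)
  ultimately show ?thesis
    by (simp add: LIMSEQ_unique)
qed

definition tier_miss_prob ::
  "real \<Rightarrow> (nat \<Rightarrow> real) \<Rightarrow> real \<Rightarrow> real \<Rightarrow> real \<Rightarrow> real \<Rightarrow> real \<Rightarrow> real \<Rightarrow> real \<Rightarrow> real \<Rightarrow>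
   nat \<Rightarrow> real \<Rightarrow> (real \<Rightarrow> real) \<Rightarrow> nat \<Rightarrow> real" where
  "tier_miss_prob Rearth a thb gam bet Pt G c f sig2 m1 m2 Lap k =
    (\<Sum>q = 0..m1. real (m1 choose q) * (-1) ^ q *
        (LBINT t=0..theta_max Rearth a thb k.
          exp (- real q * s_ES Rearth a gam bet Pt G c f m1 m2 k t * sig2)
          * Lap (real q * s_ES Rearth a gam bet Pt G c f m1 m2 k t) * sin t / 2))
    + (1 + cos (theta_max Rearth a thb k)) / 2"

text \<open>A single eavesdropping satellite: central angle Th, fading power H = |h|^2, interference I,
  and Lap the Laplace transform of I conditional on the angle.\<close>

locale eavesdropper_link = prob_space M for M :: "'w measure" +
  fixes Th H I :: "'w \<Rightarrow> real" and m1 :: nat and m2 sig2 :: real and Lap :: "real \<Rightarrow> real"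
  assumes Th_measurable[measurable]: "Th \<in> borel_measurable M"
    and H_measurable[measurable]: "H \<in> borel_measurable M"
    and I_measurable[measurable]: "I \<in> borel_measurable M"
    and Th_distributed: "distributed M lborel Th (\<lambda>x. ennreal (indicator {0..pi} x * sin x / 2))"
    and I_nonneg: "\<And>w. w \<in> space M \<Longrightarrow> 0 \<le> I w"
    and H_cdf: "\<And>x. prob {w \<in> space M. H w \<le> x} = fading_cdf m1 m2 x"
    and H_indep: "\<And>B C. B \<in> sets (borel :: real measure) \<Longrightarrow> C \<in> sets (borel :: (real \<times> real) measure) \<Longrightarrow>
        prob {w \<in> space M. H w \<in> B \<and> (Th w, I w) \<in> C}
          = prob {w \<in> space M. H w \<in> B} * prob {w \<in> space M. (Th w, I w) \<in> C}"
    and I_laplace: "\<And>s A. 0 \<le> s \<Longrightarrow> A \<in> sets borel \<Longrightarrow>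
        expectation (\<lambda>w. exp (- s * I w) * indicator A (Th w)) = Lap s * prob {w \<in> space M. Th w \<in> A}"
    and m1_pos: "1 \<le> m1" and m2_pos: "0 < m2" and sig2_pos: "0 < sig2"
begin

lemma prob_H_less: "prob {w \<in> space M. H w < y} = fading_cdf m1 m2 y"
  using H_cdf isCont_fading_cdf[OF m1_pos] by (rule prob_less_eq_continuous_cdf[OF H_measurable])

lemma AE_H_nonneg: "AE w in M. 0 \<le> H w"
proof -
  have "prob {w \<in> space M. H w < 0} = 0"
    by (simp add: prob_H_less fading_cdf_nonpos[OF m1_pos])
  then show ?thesis
    by (subst AE_iff_measurable[where N="{w \<in> space M. H w < 0}"])
      (auto simp: emeasure_eq_measure not_le)
qed

lemma expectation_Th:
  assumes [measurable]: "g \<in> borel_measurable borel"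
  shows "expectation (\<lambda>w. g (Th w)) = (\<integral>x. indicator {0..pi} x * sin x / 2 * g x \<partial>lborel)"
  by (rule distributed_integral[OF Th_distributed, symmetric])
    (auto simp: indicator_def intro: sin_ge_zero)

lemma prob_Th:
  assumes [measurable]: "A \<in> sets borel"
  shows "prob {w \<in> space M. Th w \<in> A} = (\<integral>x. indicator {0..pi} x * sin x / 2 * indicator A x \<partial>lborel)"
proof -
  have "prob {w \<in> space M. Th w \<in> A} = expectation (\<lambda>w. indicator A (Th w))"
    by (rule prob_eq_expectation_indicator)
  also have "\<dots> = (\<integral>x. indicator {0..pi} x * sin x / 2 * indicator A x \<partial>lborel)"
    by (rule expectation_Th) measurable
  finally show ?thesis .
qed

lemma AE_Th_nonneg: "AE w in M. 0 \<le> Th w"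
proof -
  have "prob {w \<in> space M. Th w \<in> {..<0}} = 0"
    by (subst prob_Th) (auto intro!: integral_eq_zero_AE simp: indicator_def)
  then show ?thesis
    by (subst AE_iff_measurable[where N="{w \<in> space M. Th w \<in> {..<0}}"])
      (auto simp: emeasure_eq_measure not_le)
qed

lemma prob_Th_ge:
  assumes "tm \<in> {0..pi}"
  shows "prob {w \<in> space M. tm \<le> Th w} = (1 + cos tm) / 2"
proof -
  have "prob {w \<in> space M. tm \<le> Th w} = (\<integral>x. indicator {0..pi} x * sin x / 2 * indicator {tm..} x \<partial>lborel)"
    using prob_Th[of "{tm..}"] by simp
  also have "\<dots> = (\<integral>x. sin x / 2 * indicator {tm..pi} x \<partial>lborel)"
    using assms by (intro Bochner_Integration.integral_cong) (auto simp: indicator_def)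
  also have "\<dots> = - cos pi / 2 - - cos tm / 2"
    using assms by (intro integral_FTC_Icc_real) (auto intro!: derivative_eq_intros)
  finally show ?thesis by simp
qed

lemma Lap_eq_expectation: "0 \<le> s \<Longrightarrow> Lap s = expectation (\<lambda>w. exp (- s * I w))"
  using I_laplace[of s UNIV] by (simp add: prob_space)

lemma Lap_bounds:
  assumes "0 \<le> s"
  shows "0 \<le> Lap s \<and> Lap s \<le> 1"
proof -
  have "expectation (\<lambda>w. exp (- s * I w)) \<le> expectation (\<lambda>w. 1)"
    using assms I_nonneg
    by (intro integral_mono integrable_const_bound[where B=1]) auto
  then show ?thesis using Lap_eq_expectation[OF assms] by (simp add: prob_space)
qed

lemma continuous_on_Lap: "continuous_on {0..} Lap"
proof -
  have "continuous_on {0..} (\<lambda>s. expectation (\<lambda>w. exp (- s * I w)))"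
  proof (rule continuous_on_sequentiallyI)
    fix u s assume "\<forall>n. u n \<in> {0::real..}" "u \<longlonglongrightarrow> s"
    then show "(\<lambda>n. expectation (\<lambda>w. exp (- u n * I w))) \<longlonglongrightarrow> expectation (\<lambda>w. exp (- s * I w))"
      using I_nonneg
      by (intro integral_dominated_convergence[where w="\<lambda>_. 1"] AE_I2 tendsto_intros) auto
  qed
  then show ?thesis
    by (rule continuous_on_cong[THEN iffD1, rotated 2]) (auto simp: Lap_eq_expectation)
qed

lemma integral_exp_interference:
  assumes tm: "tm \<in> {0..pi}" and psi: "continuous_on UNIV psi" "\<And>x. 0 \<le> psi x"
  shows "expectation (\<lambda>w. indicator {0..<tm} (Th w) * exp (- psi (Th w) * (I w + sig2)))
    = (LBINT t=0..tm. exp (- psi t * sig2) * Lap (psi t) * sin t / 2)"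
proof -
  have [measurable]: "psi \<in> borel_measurable borel"
    using psi(1) by (rule borel_measurable_continuous_onI)
  have Lap_psi_cont: "continuous_on UNIV (\<lambda>t. Lap \<bar>psi t\<bar>)"
    by (rule continuous_on_compose2[OF continuous_on_Lap]) (intro continuous_intros psi(1), auto)
  then have [measurable]: "(\<lambda>t. Lap \<bar>psi t\<bar>) \<in> borel_measurable borel"
    by (rule borel_measurable_continuous_onI)
  \<comment> \<open>The absolute values make the integrands bounded for every real t; on the range of psi they are inert.\<close>
  define c1 where "c1 t w = exp (- \<bar>psi t\<bar> * (I w + sig2))" for t w
  define L where "L t = exp (- \<bar>psi t\<bar> * sig2) * Lap \<bar>psi t\<bar>" for t
  have "expectation (\<lambda>w. indicator {0..<tm} (Th w) * c1 (Th w) w)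
      = expectation (\<lambda>w. indicator {0..<tm} (Th w) * L (Th w))"
  proof (rule integral_eq_at_random_parameter[where g="\<lambda>t _. L t" and B=1 and lo=0 and hi=tm])
    show "\<bar>c1 t w\<bar> \<le> 1" if "w \<in> space M" for t w
      using I_nonneg[OF that] sig2_pos by (simp add: c1_def)
    show "\<bar>L t\<bar> \<le> 1" for t
      using Lap_bounds[of "\<bar>psi t\<bar>"] sig2_pos by (simp add: L_def abs_mult mult_le_one)
    show "continuous_on UNIV (\<lambda>t. c1 t w)" for w
      unfolding c1_def by (intro continuous_intros psi(1))
    show "continuous_on UNIV L"
      unfolding L_def by (intro continuous_on_mult[OF _ Lap_psi_cont] continuous_intros psi(1))
    fix t and A :: "real set" assume [measurable]: "A \<in> sets borel"
    have "expectation (\<lambda>w. indicator A (Th w) * c1 t w)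
        = exp (- \<bar>psi t\<bar> * sig2) * expectation (\<lambda>w. exp (- \<bar>psi t\<bar> * I w) * indicator A (Th w))"
      by (subst integral_mult_right_zero[symmetric])
        (auto intro!: Bochner_Integration.integral_cong simp: c1_def algebra_simps exp_add[symmetric])
    also have "\<dots> = L t * expectation (\<lambda>w. indicator A (Th w))"
      using I_laplace[of "\<bar>psi t\<bar>" A] by (simp add: L_def prob_eq_expectation_indicator)
    finally show "expectation (\<lambda>w. indicator A (Th w) * c1 t w) = expectation (\<lambda>w. indicator A (Th w) * L t)"
      by (simp add: mult.commute)
  qed (auto simp: c1_def L_def)
  also have "\<dots> = (\<integral>x. indicator {0..pi} x * sin x / 2 * (indicator {0..<tm} x * L x) \<partial>lborel)"
    by (rule expectation_Th) (simp add: L_def)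
  also have "\<dots> = (LBINT t : {0..<tm}. exp (- psi t * sig2) * Lap (psi t) * sin t / 2)"
    using tm psi(2)
    by (auto simp: set_lebesgue_integral_def L_def indicator_def intro!: Bochner_Integration.integral_cong)
  also have "\<dots> = (LBINT t=0..tm. exp (- psi t * sig2) * Lap (psi t) * sin t / 2)"
    using tm by (simp only: zero_ereal_def interval_integral_Ico[of 0 tm] atLeastAtMost_iff)
  finally show ?thesis
    using psi(2) by (simp add: c1_def)
qed

lemma prob_outage:
  assumes tm: "tm \<in> {0..pi}" and phi: "continuous_on UNIV phi" "\<And>x. 0 \<le> phi x"
  shows "prob {w \<in> space M. Th w < tm \<longrightarrow> fading_rate m1 m2 * H w < phi (Th w) * (I w + sig2)}
    = (\<Sum>q = 0..m1. real (m1 choose q) * (-1) ^ q *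
        (LBINT t=0..tm. exp (- real q * phi t * sig2) * Lap (real q * phi t) * sin t / 2))
      + (1 + cos tm) / 2"
proof -
  define rate where "rate = fading_rate m1 m2"
  have "0 < rate" using fading_rate_pos[OF m2_pos] by (simp add: rate_def)
  have [measurable]: "phi \<in> borel_measurable borel"
    using phi(1) by (rule borel_measurable_continuous_onI)
  define Y where "Y z = phi (fst z) * (snd z + sig2) / rate" for z :: "real \<times> real"
  have "{0..<tm} \<times> UNIV \<in> sets (borel \<Otimes>\<^sub>M borel :: (real \<times> real) measure)"
    by (intro pair_measureI) auto
  then have [measurable]: "{0..<tm} \<times> UNIV \<in> sets (borel :: (real \<times> real) measure)"
    unfolding borel_prod .
  define E where "E = {w \<in> space M. Th w < tm \<longrightarrow> rate * H w < phi (Th w) * (I w + sig2)}"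
  define E1 where "E1 = {w \<in> space M. tm \<le> Th w}"
  define E2 where "E2 = {w \<in> space M. (Th w, I w) \<in> {0..<tm} \<times> UNIV \<and> H w < Y (Th w, I w)}"
  have "Y \<in> borel_measurable (borel \<Otimes>\<^sub>M borel)"
    unfolding Y_def by measurable
  then have [measurable]: "Y \<in> borel_measurable borel"
    by (simp add: borel_prod)
  have "prob E = prob (E1 \<union> E2)"
  proof (rule measure_eq_AE)
    show "AE w in M. (w \<in> E) = (w \<in> E1 \<union> E2)"
      using AE_Th_nonneg
    proof eventually_elim
      case (elim w)
      have "H w < Y (Th w, I w) \<longleftrightarrow> rate * H w < phi (Th w) * (I w + sig2)"
        using \<open>0 < rate\<close> by (simp add: Y_def less_divide_eq mult.commute)
      then show ?case using elim by (auto simp: E_def E1_def E2_def)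
    qed
  qed (auto simp: E_def E1_def E2_def)
  also have "\<dots> = prob E1 + prob E2"
    by (rule measure_Union) (auto simp: E1_def E2_def)
  also have "prob E1 = (1 + cos tm) / 2"
    unfolding E1_def using tm by (rule prob_Th_ge)
  also have "prob E2 = expectation (\<lambda>w. indicator ({0..<tm} \<times> UNIV) (Th w, I w) * fading_cdf m1 m2 (Y (Th w, I w)))"
    unfolding E2_def using H_indep prob_H_less by (intro prob_less_independent[where N=borel]) auto
  also have "\<dots> = expectation (\<lambda>w. \<Sum>q = 0..m1. real (m1 choose q) * (-1) ^ q *
      (indicator {0..<tm} (Th w) * exp (- (real q * phi (Th w)) * (I w + sig2))))"
  proof (rule Bochner_Integration.integral_cong[OF refl])
    fix w assume "w \<in> space M"
    then have "0 \<le> Y (Th w, I w)"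
      using phi(2) I_nonneg \<open>0 < rate\<close> sig2_pos by (simp add: Y_def)
    moreover have "rate * Y (Th w, I w) = phi (Th w) * (I w + sig2)"
      using \<open>0 < rate\<close> by (simp add: Y_def)
    ultimately have "fading_cdf m1 m2 (Y (Th w, I w))
        = (\<Sum>q = 0..m1. real (m1 choose q) * (-1) ^ q * exp (- (real q * phi (Th w)) * (I w + sig2)))"
      by (simp add: fading_cdf_binomial[OF m1_pos] rate_def[symmetric] mult.assoc)
    then show "indicator ({0..<tm} \<times> UNIV) (Th w, I w) * fading_cdf m1 m2 (Y (Th w, I w))
      = (\<Sum>q = 0..m1. real (m1 choose q) * (-1) ^ q *
          (indicator {0..<tm} (Th w) * exp (- (real q * phi (Th w)) * (I w + sig2))))"
      by (simp add: indicator_def)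
  qed
  also have "\<dots> = (\<Sum>q = 0..m1. real (m1 choose q) * (-1) ^ q *
      expectation (\<lambda>w. indicator {0..<tm} (Th w) * exp (- (real q * phi (Th w)) * (I w + sig2))))"
    using I_nonneg sig2_pos phi(2)
    by (subst Bochner_Integration.integral_sum)
      (auto intro!: integrable_const_bound[where B=1] simp: indicator_def)
  also have "\<dots> = (\<Sum>q = 0..m1. real (m1 choose q) * (-1) ^ q *
        (LBINT t=0..tm. exp (- real q * phi t * sig2) * Lap (real q * phi t) * sin t / 2))"
  proof (intro sum.cong refl arg_cong2[where f="(*)"])
    fix q
    have "continuous_on UNIV (\<lambda>x. real q * phi x)"
      by (intro continuous_intros phi(1))
    moreover have "0 \<le> real q * phi x" for x
      using phi(2) by simp
    ultimately have "expectation (\<lambda>w. indicator {0..<tm} (Th w) * exp (- (real q * phi (Th w)) * (I w + sig2)))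
        = (LBINT t=0..tm. exp (- (real q * phi t) * sig2) * Lap (real q * phi t) * sin t / 2)"
      by (rule integral_exp_interference[OF tm])
    then show "expectation (\<lambda>w. indicator {0..<tm} (Th w) * exp (- (real q * phi (Th w)) * (I w + sig2)))
        = (LBINT t=0..tm. exp (- real q * phi t * sig2) * Lap (real q * phi t) * sin t / 2)"
      by simp
  qed
  finally show ?thesis by (simp add: E_def rate_def)
qed

lemma prob_SINR_sat_less:
  assumes geometry: "0 < Rearth" "0 < a k" "0 < thb" "thb < pi / 2"
    and pos: "0 < Pt" "0 < G" "0 < c" "0 < f"
    and gam: "gam \<le> 1" "bet * (1 - gam) < gam" and bet: "0 < bet"
  shows "prob {w \<in> space M. SINR_sat Rearth a thb gam Pt G c f sig2 k (Th w) (H w) (I w) < bet}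
    = tier_miss_prob Rearth a thb gam bet Pt G c f sig2 m1 m2 Lap k"
proof -
  define tm where "tm = theta_max Rearth a thb k"
  define phi where "phi = s_ES Rearth a gam bet Pt G c f m1 m2 k"
  have [measurable]: "(\<lambda>w. SINR_sat Rearth a thb gam Pt G c f sig2 k (Th w) (H w) (I w)) \<in> borel_measurable M"
    unfolding SINR_sat_def P_rec_def dist_k_def Let_def by measurable
  have [measurable]: "phi \<in> borel_measurable borel"
    unfolding phi_def using pos(3) by (intro borel_measurable_continuous_onI continuous_on_s_ES) simp
  have "prob {w \<in> space M. SINR_sat Rearth a thb gam Pt G c f sig2 k (Th w) (H w) (I w) < bet}
      = prob {w \<in> space M. Th w < tm \<longrightarrow> fading_rate m1 m2 * H w < phi (Th w) * (I w + sig2)}"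
  proof (rule measure_eq_AE)
    show "AE w in M. (w \<in> {w \<in> space M. SINR_sat Rearth a thb gam Pt G c f sig2 k (Th w) (H w) (I w) < bet})
        = (w \<in> {w \<in> space M. Th w < tm \<longrightarrow> fading_rate m1 m2 * H w < phi (Th w) * (I w + sig2)})"
      using AE_H_nonneg
    proof eventually_elim
      case (elim w)
      show ?case
      proof (cases "w \<in> space M \<and> Th w < tm")
        case True
        then show ?thesis
          using SINR_sat_less_iff[where Rearth=Rearth and a=a and k=k, OF geometry(1,2) pos sig2_pos m2_pos gam bet _ elim I_nonneg]
          by (simp add: tm_def phi_def)
      qed (use bet in \<open>auto simp: SINR_sat_def tm_def\<close>)
    qed
  qed auto
  also have "\<dots> = (\<Sum>q = 0..m1. real (m1 choose q) * (-1) ^ q *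
        (LBINT t=0..tm. exp (- real q * phi t * sig2) * Lap (real q * phi t) * sin t / 2))
      + (1 + cos tm) / 2"
    using theta_max_bounds[where Rearth=Rearth and a=a and k=k, OF geometry] continuous_on_s_ES[of c] pos(3) s_ES_nonneg[OF pos(1,2) m2_pos bet gam(2)]
    by (intro prob_outage) (simp_all add: tm_def phi_def)
  finally show ?thesis by (simp add: tier_miss_prob_def tm_def phi_def)
qed

end

theorem theorem1:
  fixes M :: "'w measure"
    and K m :: nat and N :: "nat \<Rightarrow> nat"
    and Rearth :: real and a :: "nat \<Rightarrow> real" and thb gam Pt G c f sig2 lam m2 bet :: real
    and m1 :: nat
    and theta H I :: "nat \<Rightarrow> nat \<Rightarrow> 'w \<Rightarrow> real"
  assumes P: "prob_space M"
    and Re_pos: "Rearth > 0" and alt_pos: "\<And>k. a k > 0"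
    and thb: "0 < thb" "thb < pi / 2"
    and gam: "0 < gam" "gam \<le> 1"
    and pos: "Pt > 0" "G > 0" "c > 0" "f > 0" "sig2 > 0" "lam > 0" "m2 > 0"
    and m1_pos: "m1 \<ge> 1"
    and m_tier: "m \<in> {1..K}"
    and bet: "0 < bet" "gam < 1 \<Longrightarrow> bet < gam / (1 - gam)"
    and meas: "\<And>k j. k \<in> {1..K} - {m} \<Longrightarrow> j \<in> {1..N k} \<Longrightarrow>
        theta k j \<in> borel_measurable M \<and> H k j \<in> borel_measurable M \<and> I k j \<in> borel_measurable M"
    and theta_distr: "\<And>k j. k \<in> {1..K} - {m} \<Longrightarrow> j \<in> {1..N k} \<Longrightarrow>
        distributed M lborel (theta k j) (\<lambda>x. ennreal (indicator {0..pi} x * sin x / 2))"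
    and I_nonneg: "\<And>k j w. k \<in> {1..K} - {m} \<Longrightarrow> j \<in> {1..N k} \<Longrightarrow> w \<in> space M \<Longrightarrow>
        I k j w \<ge> 0"
    and H_cdf: "\<And>k j x. k \<in> {1..K} - {m} \<Longrightarrow> j \<in> {1..N k} \<Longrightarrow>
        measure M {w \<in> space M. H k j w \<le> x} = fading_cdf m1 m2 x"
    and H_indep: "\<And>k j B C. k \<in> {1..K} - {m} \<Longrightarrow> j \<in> {1..N k} \<Longrightarrow>
        B \<in> sets (borel :: real measure) \<Longrightarrow> C \<in> sets (borel :: (real \<times> real) measure) \<Longrightarrow>
        measure M {w \<in> space M. H k j w \<in> B \<and> (theta k j w, I k j w) \<in> C}
          = measure M {w \<in> space M. H k j w \<in> B} * measure M {w \<in> space M. (theta k j w, I k j w) \<in> C}"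
    and I_cond_laplace: "\<And>k j s A. k \<in> {1..K} - {m} \<Longrightarrow> j \<in> {1..N k} \<Longrightarrow> s \<ge> 0 \<Longrightarrow>
        A \<in> sets borel \<Longrightarrow>
        (\<integral>w. exp (- s * I k j w) * indicator A (theta k j w) \<partial>M)
          = laplace_I Rearth a thb lam Pt G c f m1 m2 k s * measure M {w \<in> space M. theta k j w \<in> A}"
    and events_indep: "prob_space.indep_events M
        (\<lambda>(k, j). {w \<in> space M.
           SINR_sat Rearth a thb gam Pt G c f sig2 k (theta k j w) (H k j w) (I k j w) < bet})
        {(k, j). k \<in> {1..K} - {m} \<and> j \<in> {1..N k}}"
  shows "measure M {w \<in> space M. \<forall>k \<in> {1..K} - {m}. \<forall>j \<in> {1..N k}.
            SINR_sat Rearth a thb gam Pt G c f sig2 k (theta k j w) (H k j w) (I k j w) < bet}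
         = (\<Prod>k \<in> {1..K} - {m}.
             ((\<Sum>q = 0..m1. real (m1 choose q) * (-1) ^ q *
                 (LBINT th=0..(theta_max Rearth a thb k).
                    exp (- real q * s_ES Rearth a gam bet Pt G c f m1 m2 k th * sig2)
                    * laplace_I Rearth a thb lam Pt G c f m1 m2 k
                        (real q * s_ES Rearth a gam bet Pt G c f m1 m2 k th)
                    * sin th / 2))
              + (1 + cos (theta_max Rearth a thb k)) / 2) ^ N k)"
proof -
  interpret prob_space M by (rule P)
  define Ix where "Ix = {(k, j). k \<in> {1..K} - {m} \<and> j \<in> {1..N k}}"
  define Ev where "Ev = (\<lambda>(k, j). {w \<in> space M.
    SINR_sat Rearth a thb gam Pt G c f sig2 k (theta k j w) (H k j w) (I k j w) < bet})"
  have Ix_Sigma: "Ix = Sigma ({1..K} - {m}) (\<lambda>k. {1..N k})"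
    by (auto simp: Ix_def)
  have margin: "bet * (1 - gam) < gam"
    using gam(2) bet(2) by (rule secrecy_margin_pos)
  have Ev_prob: "prob (Ev (k, j))
      = tier_miss_prob Rearth a thb gam bet Pt G c f sig2 m1 m2 (laplace_I Rearth a thb lam Pt G c f m1 m2 k) k"
    if k: "k \<in> {1..K} - {m}" and j: "j \<in> {1..N k}" for k j
  proof -
    interpret eavesdropper_link M "theta k j" "H k j" "I k j" m1 m2 sig2
        "laplace_I Rearth a thb lam Pt G c f m1 m2 k"
      using meas[OF k j] theta_distr[OF k j] I_nonneg[OF k j] H_cdf[OF k j] H_indep[OF k j]
        I_cond_laplace[OF k j] m1_pos pos
      by unfold_locales auto
    show ?thesis
      unfolding Ev_def using Re_pos alt_pos thb pos gam(2) margin bet(1)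
      by (simp add: prob_SINR_sat_less)
  qed
  have "{w \<in> space M. \<forall>k \<in> {1..K} - {m}. \<forall>j \<in> {1..N k}.
      SINR_sat Rearth a thb gam Pt G c f sig2 k (theta k j w) (H k j w) (I k j w) < bet}
    = {w \<in> space M. \<forall>p \<in> Ix. w \<in> Ev p}"
    by (auto simp: Ix_def Ev_def)
  also have "prob \<dots> = (\<Prod>p \<in> Ix. prob (Ev p))"
  proof (rule prob_all_indep_events)
    show "indep_events Ev Ix" using events_indep by (simp add: Ix_def Ev_def)
    show "finite Ix" by (simp add: Ix_Sigma)
  qed
  also have "\<dots> = (\<Prod>k \<in> {1..K} - {m}. \<Prod>j \<in> {1..N k}. prob (Ev (k, j)))"
    unfolding Ix_Sigma by (subst prod.Sigma) auto
  finally show ?thesis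
    by (simp add: Ev_prob tier_miss_prob_def)
qed

end
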